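(* Let $T\in\mathcal{T}_3$. (i) If $T\ne T_2$, then $T$ has a minimum-size identifying code $C(T)$ containing all vertices of degree at most $2$. (ii) If $T\notin\{T_2,T_3\}$, then $C(T)$ can be chosen to be an independent set containing every vertex of degree at most $2$, and for every vertex $v\in C(T)$, the set $C(T)\setminus\{v\}$ is a minimum-size identifying code of the forest $T-v$.
   Context: An identifying code of a graph $G$ is a set $C\subseteq V(G)$ such that every vertex $v$ has $N[v]\cap C\neq\emptyset$ and for all distinct $u,v$, $N[u]\cap C \ne N[v]\cap C$, where $N[v]$ is the closed neighborhood. A 3-star is $K_{1,3}$. For a graph $G'$, a vertex $v$ of $G'$ and a star $S$, $G'\rhd_v S$ is obtained from the disjoint union of $G'$ and $S$ by identifying $v$ with a leaf of $S$. An appended 3-star is a graph $G_p$ ($p\ge0$) where $G_0$ is a 3-star and $G_i=G_{i-1}\rhd_{v_{i-1}}S_i$ with each $S_i$ a 3-star and $v_{i-1}\in V(G_{i-1})$. $T_2$ is the tree with vertices $w,x,y,z,u_1,a_1,b_1$ and edges $wx,xy,yz,zu_1,u_1a_1,u_1b_1$; $T_3$ is obtained from $T_2$ by adding vertices $u_2,a_2,b_2$ and edges $zu_2,u_2a_2,u_2b_2$. $\mathcal{T}_3$ consists of $T_2$, $T_3$ and all appended 3-stars of maximum degree 3 and diameter at most 6 (12 trees in total). *)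

theory Defs
  imports Main
begin

text \<open>A (finite simple) graph is given by a vertex set V and an edge set E of
  two-element subsets of V.\<close>

definition adj :: "'a set set \<Rightarrow> 'a \<Rightarrow> 'a \<Rightarrow> bool" where
  "adj E u v \<longleftrightarrow> u \<noteq> v \<and> {u, v} \<in> E"

definition closed_nbhd :: "'a set \<Rightarrow> 'a set set \<Rightarrow> 'a \<Rightarrow> 'a set" where
  "closed_nbhd V E v = {u \<in> V. u = v \<or> adj E u v}"

definition degree :: "'a set \<Rightarrow> 'a set set \<Rightarrow> 'a \<Rightarrow> nat" where
  "degree V E v = card {u \<in> V. adj E u v}"

definition is_identifying_code :: "'a set \<Rightarrow> 'a set set \<Rightarrow> 'a set \<Rightarrow> bool" where
  "is_identifying_code V E C \<longleftrightarrow> C \<subseteq> V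
     \<and> (\<forall>v\<in>V. closed_nbhd V E v \<inter> C \<noteq> {})
     \<and> (\<forall>u\<in>V. \<forall>v\<in>V. u \<noteq> v \<longrightarrow> closed_nbhd V E u \<inter> C \<noteq> closed_nbhd V E v \<inter> C)"

definition is_min_identifying_code :: "'a set \<Rightarrow> 'a set set \<Rightarrow> 'a set \<Rightarrow> bool" where
  "is_min_identifying_code V E C \<longleftrightarrow> is_identifying_code V E C
     \<and> (\<forall>D. is_identifying_code V E D \<longrightarrow> card C \<le> card D)"

definition independent :: "'a set set \<Rightarrow> 'a set \<Rightarrow> bool" where
  "independent E C \<longleftrightarrow> (\<forall>u\<in>C. \<forall>v\<in>C. \<not> adj E u v)"

definition del_vertex_V :: "'a set \<Rightarrow> 'a \<Rightarrow> 'a set" where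
  "del_vertex_V V v = V - {v}"

definition del_vertex_E :: "'a set set \<Rightarrow> 'a \<Rightarrow> 'a set set" where
  "del_vertex_E E v = {e \<in> E. v \<notin> e}"

text \<open>Step: G \<rhd>_v S where S is a 3-star with
  centre c and leaves v, a, b (the leaf v is identified with the vertex v of G),
  c, a, b being new vertices.\<close>
inductive appended_3star :: "'a set \<Rightarrow> 'a set set \<Rightarrow> bool" where
  base: "distinct [c, l1, l2, l3] \<Longrightarrow>
     appended_3star {c, l1, l2, l3} {{c, l1}, {c, l2}, {c, l3}}"
| step: "appended_3star V E \<Longrightarrow> v \<in> V \<Longrightarrow> distinct [c, a, b] \<Longrightarrow>
     c \<notin> V \<Longrightarrow> a \<notin> V \<Longrightarrow> b \<notin> V \<Longrightarrow>
     appended_3star (V \<union> {c, a, b}) (E \<union> {{v, c}, {c, a}, {c, b}})"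

definition is_walk :: "'a set \<Rightarrow> 'a set set \<Rightarrow> 'a list \<Rightarrow> bool" where
  "is_walk V E p \<longleftrightarrow> p \<noteq> [] \<and> set p \<subseteq> V
     \<and> (\<forall>i. Suc i < length p \<longrightarrow> adj E (p ! i) (p ! Suc i))"

definition diameter_le :: "'a set \<Rightarrow> 'a set set \<Rightarrow> nat \<Rightarrow> bool" where
  "diameter_le V E k \<longleftrightarrow> (\<forall>u\<in>V. \<forall>v\<in>V. \<exists>p. is_walk V E p \<and> hd p = u \<and> last p = v
       \<and> length p \<le> Suc k)"

definition max_degree_eq :: "'a set \<Rightarrow> 'a set set \<Rightarrow> nat \<Rightarrow> bool" where
  "max_degree_eq V E d \<longleftrightarrow> (\<forall>v\<in>V. degree V E v \<le> d) \<and> (\<exists>v\<in>V. degree V E v = d)"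

definition is_T2 :: "'a set \<Rightarrow> 'a set set \<Rightarrow> bool" where
  "is_T2 V E \<longleftrightarrow> (\<exists>w x y z u1 a1 b1. distinct [w, x, y, z, u1, a1, b1]
     \<and> V = {w, x, y, z, u1, a1, b1}
     \<and> E = {{w, x}, {x, y}, {y, z}, {z, u1}, {u1, a1}, {u1, b1}})"

definition is_T3 :: "'a set \<Rightarrow> 'a set set \<Rightarrow> bool" where
  "is_T3 V E \<longleftrightarrow> (\<exists>w x y z u1 a1 b1 u2 a2 b2. distinct [w, x, y, z, u1, a1, b1, u2, a2, b2]
     \<and> V = {w, x, y, z, u1, a1, b1, u2, a2, b2}
     \<and> E = {{w, x}, {x, y}, {y, z}, {z, u1}, {u1, a1}, {u1, b1}, {z, u2}, {u2, a2}, {u2, b2}})"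

definition in_cal_T3 :: "'a set \<Rightarrow> 'a set set \<Rightarrow> bool" where
  "in_cal_T3 V E \<longleftrightarrow> is_T2 V E \<or> is_T3 V E
     \<or> (appended_3star V E \<and> max_degree_eq V E 3 \<and> diameter_le V E 6)"

end

(*
  Apart from T2 and T3, every member of the family is a cherry tree: a root with three
  children, below which hang vertices y carrying two pendant leaves each. This follows by
  induction along the construction of an appended 3-star: appending a star to a cherry tree
  gives a cherry tree again (after rerooting it at a cherry centre if necessary), or a vertex
  of degree 4, or two vertices at distance at least 7, as certified by a 1-Lipschitz integer
  potential; the latter two properties survive all further appending.

  In a cherry tree the children of the root together with all leaves form an independent
  identifying code containing every vertex of degree at most 2. It is minimum, also after
  deleting any of its vertices, by counting: any identifying code D contains two vertices of
  every cherry, three if it contains the centre but not its parent, and D must meet the closed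
  neighbourhood of every child x of the root; if x \<notin> D and no child of x lies in D, only the
  root does, and separation allows this for at most one x. The tree T3 is settled by direct
  inspection.
*)
theory Submission
  imports Defs
begin

section \<open>Identifying codes\<close>

definition identifies_on :: "'a set \<Rightarrow> 'a set set \<Rightarrow> 'a set \<Rightarrow> 'a set \<Rightarrow> bool" where
  "identifies_on V E D W \<longleftrightarrow> (\<forall>u\<in>W. closed_nbhd V E u \<inter> D \<noteq> {})
     \<and> (\<forall>u\<in>W. \<forall>w\<in>W. u \<noteq> w \<longrightarrow> closed_nbhd V E u \<inter> D \<noteq> closed_nbhd V E w \<inter> D)"

lemma identifies_onD:
  assumes "identifies_on V E D W"
  shows identifies_on_dominates: "u \<in> W \<Longrightarrow> closed_nbhd V E u \<inter> D \<noteq> {}"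
    and identifies_on_separates:
      "u \<in> W \<Longrightarrow> w \<in> W \<Longrightarrow> u \<noteq> w \<Longrightarrow> closed_nbhd V E u \<inter> D \<noteq> closed_nbhd V E w \<inter> D"
  using assms unfolding identifies_on_def by blast+

lemma is_identifying_code_iff: "is_identifying_code V E D \<longleftrightarrow> D \<subseteq> V \<and> identifies_on V E D V"
  unfolding is_identifying_code_def identifies_on_def by blast

lemma closed_nbhd_del_vertex:
  "u \<noteq> v \<Longrightarrow> closed_nbhd (del_vertex_V V v) (del_vertex_E E v) u = closed_nbhd V E u - {v}"
  unfolding closed_nbhd_def del_vertex_V_def del_vertex_E_def adj_def by auto

lemma is_identifying_code_del_vertex_iff:
  "is_identifying_code (del_vertex_V V v) (del_vertex_E E v) D
     \<longleftrightarrow> D \<subseteq> V - {v} \<and> identifies_on V E D (V - {v})"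
proof -
  have "closed_nbhd (del_vertex_V V v) (del_vertex_E E v) u \<inter> D = closed_nbhd V E u \<inter> D"
    if "D \<subseteq> V - {v}" "u \<in> V - {v}" for u
    using closed_nbhd_del_vertex[of u v V E] that by auto
  then show ?thesis
    unfolding is_identifying_code_def identifies_on_def del_vertex_V_def by auto
qed

lemma identifies_onI:
  assumes in_D: "\<And>u. u \<in> W \<Longrightarrow> u \<in> D \<Longrightarrow> closed_nbhd V E u \<inter> D = {u}"
    and notin_D: "\<And>u. u \<in> W \<Longrightarrow> u \<notin> D \<Longrightarrow> 2 \<le> card (closed_nbhd V E u \<inter> D)"
    and separates: "\<And>u w. u \<in> W - D \<Longrightarrow> w \<in> W - D \<Longrightarrow>
      closed_nbhd V E u \<inter> D = closed_nbhd V E w \<inter> D \<Longrightarrow> u = w"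
  shows "identifies_on V E D W"
  unfolding identifies_on_def
proof (intro conjI ballI impI notI)
  fix u assume "u \<in> W" "closed_nbhd V E u \<inter> D = {}"
  then show False using in_D notin_D by (cases "u \<in> D") fastforce+
next
  fix u w assume u: "u \<in> W" and w: "w \<in> W" and "u \<noteq> w"
    and eq: "closed_nbhd V E u \<inter> D = closed_nbhd V E w \<inter> D"
  consider "u \<in> D" "w \<in> D" | "u \<in> D" "w \<notin> D" | "u \<notin> D" "w \<in> D" | "u \<notin> D" "w \<notin> D"
    by blast
  then show False
  proof cases
    case 1 then show ?thesis using in_D u w eq \<open>u \<noteq> w\<close> by auto
  next
    case 2 then show ?thesis using in_D[OF u] notin_D[OF w] eq by simp
  next
    case 3 then show ?thesis using in_D[OF w] notin_D[OF u] eq by simp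
  next
    case 4 then show ?thesis using separates u w eq \<open>u \<noteq> w\<close> by blast
  qed
qed

lemma card_cherry_ge:
  assumes D: "identifies_on V E D W" "finite D"
    and W: "y \<in> W" "a \<in> W" "b \<in> W" and distinct: "distinct [y, a, b]"
    and N: "closed_nbhd V E y = {p, y, a, b}" "closed_nbhd V E a = {a, y}"
      "closed_nbhd V E b = {b, y}"
  shows "2 + of_bool (y \<in> D \<and> p \<notin> D) \<le> card (D \<inter> {y, a, b})"
proof -
  have dom: "{a, y} \<inter> D \<noteq> {}" "{b, y} \<inter> D \<noteq> {}"
    using identifies_on_dominates[OF D(1)] W N by metis+
  have sep_ab: "{a, y} \<inter> D \<noteq> {b, y} \<inter> D"
    using identifies_on_separates[OF D(1) W(2,3)] distinct N by auto
  have card2: "2 \<le> card (D \<inter> {y, a, b})" if "s \<noteq> t" "{s, t} \<subseteq> D \<inter> {y, a, b}" for s t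
    using card_mono[OF _ that(2)] that(1) D(2) by simp
  show ?thesis
  proof (cases "y \<in> D \<and> p \<notin> D")
    case True
    have "{p, y, a, b} \<inter> D \<noteq> {a, y} \<inter> D" "{p, y, a, b} \<inter> D \<noteq> {b, y} \<inter> D"
      using identifies_on_separates[OF D(1)] W distinct N by (metis distinct_length_2_or_more)+
    then have "D \<inter> {y, a, b} = {y, a, b}" using True by auto
    then show ?thesis using True distinct by simp
  next
    case False
    have "2 \<le> card (D \<inter> {y, a, b})"
      using dom sep_ab distinct card2[of y a] card2[of y b] card2[of a b] by (cases "y \<in> D") auto
    moreover have "of_bool (y \<in> D \<and> p \<notin> D) = (0::nat)" using False by simp
    ultimately show ?thesis by (simp only: add_0_right)
  qed
qed

section \<open>Degrees and distances\<close>

lemma degree_eq_card_closed_nbhd: "degree V E v = card (closed_nbhd V E v - {v})"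
  unfolding degree_def closed_nbhd_def by (rule arg_cong[where f = card]) (auto simp: adj_def)

lemma degree_mono:
  "finite V' \<Longrightarrow> V \<subseteq> V' \<Longrightarrow> E \<subseteq> E' \<Longrightarrow> degree V E v \<le> degree V' E' v"
  unfolding degree_def adj_def by (rule card_mono) auto

lemma degree_append_star:
  assumes "finite V" "\<forall>e\<in>E. e \<subseteq> V" "u \<in> V" "c \<notin> V" "a \<notin> V" "b \<notin> V"
  shows "degree (V \<union> {c, a, b}) (E \<union> {{u, c}, {c, a}, {c, b}}) u = Suc (degree V E u)"
proof -
  have "{w \<in> V \<union> {c, a, b}. adj (E \<union> {{u, c}, {c, a}, {c, b}}) w u} = insert c {w \<in> V. adj E w u}"
    using assms(2-6) unfolding adj_def by (auto simp: doubleton_eq_iff)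
  then show ?thesis using assms(1,4) unfolding degree_def by simp
qed

definition graph_lipschitz :: "'a set set \<Rightarrow> ('a \<Rightarrow> int) \<Rightarrow> bool" where
  "graph_lipschitz E f \<longleftrightarrow> (\<forall>p q. adj E p q \<longrightarrow> \<bar>f p - f q\<bar> \<le> 1)"

definition has_lipschitz_gap :: "'a set \<Rightarrow> 'a set set \<Rightarrow> nat \<Rightarrow> bool" where
  "has_lipschitz_gap V E k \<longleftrightarrow>
     (\<exists>f u w. u \<in> V \<and> w \<in> V \<and> graph_lipschitz E f \<and> f u + int k \<le> f w)"

lemma graph_lipschitz_walk:
  assumes f: "graph_lipschitz E f" and p: "is_walk V E p"
  shows "f (last p) \<le> f (hd p) + int (length p - 1)"
proof -
  have "f (p ! k) \<le> f (p ! 0) + int k" if "k < length p" for k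
    using that
  proof (induction k)
    case (Suc k)
    then have "adj E (p ! k) (p ! Suc k)" using p unfolding is_walk_def by blast
    then show ?case using Suc f unfolding graph_lipschitz_def by force
  qed simp
  moreover have "p \<noteq> []" using p unfolding is_walk_def by blast
  ultimately show ?thesis by (simp add: hd_conv_nth last_conv_nth)
qed

lemma has_lipschitz_gap_not_diameter_le:
  assumes "has_lipschitz_gap V E (Suc k)" shows "\<not> diameter_le V E k"
proof
  assume diam: "diameter_le V E k"
  obtain f u w where "u \<in> V" "w \<in> V" and f: "graph_lipschitz E f" and gap: "f u + int (Suc k) \<le> f w"
    using assms unfolding has_lipschitz_gap_def by blast
  then obtain p where p: "is_walk V E p" "hd p = u" "last p = w" "length p \<le> Suc k"
    using diam unfolding diameter_le_def by blast
  have "f w \<le> f u + int (length p - 1)" using graph_lipschitz_walk[OF f p(1)] p(2,3) by simp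
  then show False using p(4) gap by linarith
qed

lemma graph_lipschitz_append_star:
  assumes "graph_lipschitz E f" "\<bar>f v - f c\<bar> \<le> 1" "\<bar>f c - f a\<bar> \<le> 1" "\<bar>f c - f b\<bar> \<le> 1"
  shows "graph_lipschitz (E \<union> {{v, c}, {c, a}, {c, b}}) f"
  using assms unfolding graph_lipschitz_def adj_def by (auto simp: doubleton_eq_iff abs_minus_commute)

lemma has_lipschitz_gap_append_star:
  assumes gap: "has_lipschitz_gap V E k" and E: "\<forall>e\<in>E. e \<subseteq> V"
    and "v \<in> V" "c \<notin> V" "a \<notin> V" "b \<notin> V"
  shows "has_lipschitz_gap (V \<union> {c, a, b}) (E \<union> {{v, c}, {c, a}, {c, b}}) k"
proof -
  obtain f u w where uw: "u \<in> V" "w \<in> V" and f: "graph_lipschitz E f" and "f u + int k \<le> f w"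
    using gap unfolding has_lipschitz_gap_def by blast
  define g where "g z = (if z \<in> V then f z else f v)" for z
  have "graph_lipschitz E g"
    using f E unfolding graph_lipschitz_def g_def adj_def by fastforce
  then have "graph_lipschitz (E \<union> {{v, c}, {c, a}, {c, b}}) g"
    by (rule graph_lipschitz_append_star) (use assms in \<open>simp_all add: g_def\<close>)
  moreover have "g u + int k \<le> g w" using \<open>f u + int k \<le> f w\<close> uw by (simp add: g_def)
  ultimately show ?thesis using uw unfolding has_lipschitz_gap_def by blast
qed

lemma appended_3star_finite: "appended_3star V E \<Longrightarrow> finite V \<and> (\<forall>e\<in>E. e \<subseteq> V)"
  by (induction rule: appended_3star.induct) auto

section \<open>Cherry trees\<close>

text \<open>A root r with three children X; each y \<in> Y hangs below par y \<in> X and carries the two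
  pendant leaves la y and lb y.\<close>
locale cherry_tree =
  fixes V :: "'a set" and E :: "'a set set" and r :: 'a and X Y :: "'a set"
    and par la lb :: "'a \<Rightarrow> 'a"
  assumes card_X: "card X = 3" and finite_Y: "finite Y"
    and root_notin_X: "r \<notin> X" and root_notin_Y: "r \<notin> Y" and X_Y_disjoint: "X \<inter> Y = {}"
    and par_in_X: "y \<in> Y \<Longrightarrow> par y \<in> X"
    and la_notin: "y \<in> Y \<Longrightarrow> la y \<notin> insert r (X \<union> Y)"
    and lb_notin: "y \<in> Y \<Longrightarrow> lb y \<notin> insert r (X \<union> Y)"
    and la_neq_lb: "y \<in> Y \<Longrightarrow> y' \<in> Y \<Longrightarrow> la y \<noteq> lb y'"
    and inj_la: "inj_on la Y" and inj_lb: "inj_on lb Y"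
    and V_eq: "V = insert r (X \<union> Y \<union> la ` Y \<union> lb ` Y)"
    and E_eq: "E = (\<lambda>x. {r, x}) ` X \<union> (\<lambda>y. {par y, y}) ` Y
      \<union> (\<lambda>y. {y, la y}) ` Y \<union> (\<lambda>y. {y, lb y}) ` Y"

definition is_cherry_tree :: "'a set \<Rightarrow> 'a set set \<Rightarrow> bool" where
  "is_cherry_tree V E \<longleftrightarrow> (\<exists>r X Y par la lb. cherry_tree V E r X Y par la lb)"

context cherry_tree
begin

lemma swap_leaves: "cherry_tree V E r X Y par lb la"
proof
  show "V = insert r (X \<union> Y \<union> lb ` Y \<union> la ` Y)" using V_eq by auto
  show "E = (\<lambda>x. {r, x}) ` X \<union> (\<lambda>y. {par y, y}) ` Y \<union> (\<lambda>y. {y, lb y}) ` Y \<union> (\<lambda>y. {y, la y}) ` Y"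
    using E_eq by auto
qed (use card_X finite_Y root_notin_X root_notin_Y X_Y_disjoint par_in_X la_notin lb_notin
      inj_la inj_lb la_neq_lb in metis)+

lemma finite_X: "finite X"
  using card_X by (metis card.infinite zero_neq_numeral)

lemma finite_V: "finite V"
  using finite_X finite_Y by (simp add: V_eq)

lemma in_V: "r \<in> V" "x \<in> X \<Longrightarrow> x \<in> V" "y \<in> Y \<Longrightarrow> y \<in> V"
  "y \<in> Y \<Longrightarrow> la y \<in> V" "y \<in> Y \<Longrightarrow> lb y \<in> V"
  by (simp_all add: V_eq)

declare par_in_X [simp]

lemma distinct_vertices [simp]:
  "r \<notin> X" "r \<notin> Y" "x \<in> X \<Longrightarrow> x \<notin> Y"
  "y \<in> Y \<Longrightarrow> la y \<notin> X" "y \<in> Y \<Longrightarrow> la y \<notin> Y" "y \<in> Y \<Longrightarrow> lb y \<notin> X" "y \<in> Y \<Longrightarrow> lb y \<notin> Y"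
  "y \<in> Y \<Longrightarrow> par y \<noteq> r" "y \<in> Y \<Longrightarrow> la y \<noteq> r" "y \<in> Y \<Longrightarrow> lb y \<noteq> r"
  "y \<in> Y \<Longrightarrow> y' \<in> Y \<Longrightarrow> par y \<noteq> y'"
  "y \<in> Y \<Longrightarrow> y' \<in> Y \<Longrightarrow> la y \<noteq> y'" "y \<in> Y \<Longrightarrow> y' \<in> Y \<Longrightarrow> lb y \<noteq> y'"
  "y \<in> Y \<Longrightarrow> y' \<in> Y \<Longrightarrow> la y \<noteq> par y'" "y \<in> Y \<Longrightarrow> y' \<in> Y \<Longrightarrow> lb y \<noteq> par y'"
  "y \<in> Y \<Longrightarrow> y' \<in> Y \<Longrightarrow> la y \<noteq> lb y'"
  using root_notin_X root_notin_Y X_Y_disjoint par_in_X la_notin lb_notin la_neq_lb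
  by (metis Int_iff empty_iff insert_iff Un_iff)+

lemmas distinct_vertices_sym [simp] = distinct_vertices(8-16)[THEN not_sym]

lemma la_eq_iff: "y \<in> Y \<Longrightarrow> y' \<in> Y \<Longrightarrow> la y = la y' \<longleftrightarrow> y = y'"
  and lb_eq_iff: "y \<in> Y \<Longrightarrow> y' \<in> Y \<Longrightarrow> lb y = lb y' \<longleftrightarrow> y = y'"
  using inj_la inj_lb by (auto dest: inj_onD)

lemma adj_iff: "adj E p q \<longleftrightarrow>
    (p = r \<and> q \<in> X) \<or> (q = r \<and> p \<in> X)
  \<or> (\<exists>y\<in>Y. (p = par y \<and> q = y) \<or> (q = par y \<and> p = y))
  \<or> (\<exists>y\<in>Y. (p = y \<and> q = la y) \<or> (q = y \<and> p = la y))
  \<or> (\<exists>y\<in>Y. (p = y \<and> q = lb y) \<or> (q = y \<and> p = lb y))" (is "_ \<longleftrightarrow> ?R")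
proof -
  have "{p, q} \<in> E \<longleftrightarrow> ?R"
    unfolding E_eq by (auto simp: doubleton_eq_iff)
  moreover have "?R \<Longrightarrow> p \<noteq> q" by auto
  ultimately show ?thesis unfolding adj_def by blast
qed

lemma closed_nbhd_root: "closed_nbhd V E r = insert r X"
  unfolding closed_nbhd_def adj_iff by (auto simp: V_eq)

lemma closed_nbhd_X: "x \<in> X \<Longrightarrow> closed_nbhd V E x = {x, r} \<union> {y \<in> Y. par y = x}"
  unfolding closed_nbhd_def adj_iff by (auto simp: V_eq)

lemma closed_nbhd_Y: "y \<in> Y \<Longrightarrow> closed_nbhd V E y = {par y, y, la y, lb y}"
  unfolding closed_nbhd_def adj_iff using la_eq_iff lb_eq_iff by (auto simp: V_eq)

lemma closed_nbhd_la: "y \<in> Y \<Longrightarrow> closed_nbhd V E (la y) = {la y, y}"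
  and closed_nbhd_lb: "y \<in> Y \<Longrightarrow> closed_nbhd V E (lb y) = {lb y, y}"
  unfolding closed_nbhd_def adj_iff using la_eq_iff lb_eq_iff
  by (auto simp: V_eq)

definition cherry :: "'a \<Rightarrow> 'a set" where
  "cherry y = {y, la y, lb y}"

definition code :: "'a set" where
  "code = X \<union> la ` Y \<union> lb ` Y"

lemma code_subset_V: "code \<subseteq> V"
  unfolding code_def V_eq by blast

lemma V_minus_code: "V - code = insert r Y"
  unfolding code_def V_eq by auto

lemma finite_code: "finite code"
  using code_subset_V finite_V finite_subset by blast

lemma card_code: "card code = 3 + 2 * card Y"
proof -
  have "X \<inter> la ` Y = {}" "(X \<union> la ` Y) \<inter> lb ` Y = {}" by auto
  then have "card code = card X + card (la ` Y) + card (lb ` Y)"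
    unfolding code_def using finite_X finite_Y by (simp add: card_Un_disjoint)
  then show ?thesis using card_X card_image[OF inj_la] card_image[OF inj_lb] by simp
qed

lemma closed_nbhd_Int_code_self: "u \<in> code \<Longrightarrow> closed_nbhd V E u \<inter> code = {u}"
  unfolding code_def using la_eq_iff lb_eq_iff
  by (auto simp: closed_nbhd_X closed_nbhd_la closed_nbhd_lb)

lemma closed_nbhd_Int_code:
  "closed_nbhd V E r \<inter> code = X" "y \<in> Y \<Longrightarrow> closed_nbhd V E y \<inter> code = {par y, la y, lb y}"
  unfolding code_def by (auto simp: closed_nbhd_root closed_nbhd_Y)

lemma leaf_in_closed_nbhd:
  assumes "u \<in> insert r Y" "w \<in> Y" "l \<in> {la w, lb w}" "l \<in> closed_nbhd V E u"
  shows "u = w"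
  using assms la_eq_iff lb_eq_iff by (auto simp: closed_nbhd_root closed_nbhd_Y)

text \<open>Each inner vertex still sees two code vertices, one of them a leaf below it, after one
  code vertex is removed.\<close>
lemma identifies_on_code_minus:
  assumes S: "S \<subseteq> code" "card S \<le> 1"
  shows "identifies_on V E (code - S) (V - S)"
proof (rule identifies_onI)
  have finite_S: "finite S" using S(1) finite_code finite_subset by blast
  have inner: "u \<in> insert r Y" if "u \<in> V - S" "u \<notin> code - S" for u
    using that S(1) V_minus_code by blast
  have leaf_kept: "\<exists>l\<in>{la y, lb y}. l \<notin> S" if "y \<in> Y" for y
  proof (rule ccontr)
    assume "\<not> ?thesis"
    then have "{la y, lb y} \<subseteq> S" by blast
    then have "card {la y, lb y} \<le> card S" by (rule card_mono[OF finite_S])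
    then show False using S(2) that by simp
  qed
  show "closed_nbhd V E u \<inter> (code - S) = {u}" if "u \<in> V - S" "u \<in> code - S" for u
    using closed_nbhd_Int_code_self that by blast
  show "2 \<le> card (closed_nbhd V E u \<inter> (code - S))" if "u \<in> V - S" "u \<notin> code - S" for u
  proof -
    have "card (closed_nbhd V E u \<inter> code) - card S \<le> card (closed_nbhd V E u \<inter> code - S)"
      by (rule diff_card_le_card_Diff[OF finite_S])
    moreover have "card (closed_nbhd V E u \<inter> code) = 3"
      using inner[OF that] card_X by (auto simp: closed_nbhd_Int_code)
    ultimately show ?thesis using S(2) by (simp add: Int_Diff)
  qed
  show "u = w" if "u \<in> V - S - (code - S)" "w \<in> V - S - (code - S)"
    and eq: "closed_nbhd V E u \<inter> (code - S) = closed_nbhd V E w \<inter> (code - S)" for u w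
  proof -
    have u: "u \<in> insert r Y" and w: "w \<in> insert r Y" using inner that(1,2) by blast+
    have sees_leaf: "\<exists>l\<in>{la y, lb y}. l \<in> closed_nbhd V E y \<inter> (code - S)" if "y \<in> Y" for y
      using leaf_kept[OF that] closed_nbhd_Int_code(2)[OF that] by blast
    consider "w \<in> Y" | "u \<in> Y" | "u = r" "w = r" using u w by blast
    then show "u = w"
    proof cases
      case 1 then show ?thesis using sees_leaf[OF 1] eq leaf_in_closed_nbhd[OF u 1] by blast
    next
      case 2 then show ?thesis using sees_leaf[OF 2] eq leaf_in_closed_nbhd[OF w 2] by blast
    qed simp
  qed
qed

definition detached :: "'a set \<Rightarrow> 'a set" where
  "detached D = {y \<in> Y. y \<in> D \<and> par y \<notin> D}"

lemma card_decompose: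
  assumes "D \<subseteq> V"
  shows "card D = card (D \<inter> insert r X) + (\<Sum>y\<in>Y. card (D \<inter> cherry y))"
proof -
  have finite_D: "finite D" using assms finite_V finite_subset by blast
  have D_eq: "D = (D \<inter> insert r X) \<union> (\<Union>y\<in>Y. D \<inter> cherry y)"
    using assms unfolding V_eq cherry_def by auto
  have "(D \<inter> insert r X) \<inter> (\<Union>y\<in>Y. D \<inter> cherry y) = {}"
    unfolding cherry_def by auto
  then have "card D = card (D \<inter> insert r X) + card (\<Union>y\<in>Y. D \<inter> cherry y)"
    using finite_D finite_Y by (subst D_eq) (simp add: card_Un_disjoint)
  also have "card (\<Union>y\<in>Y. D \<inter> cherry y) = (\<Sum>y\<in>Y. card (D \<inter> cherry y))"
    using finite_Y finite_D la_eq_iff lb_eq_iff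
    by (intro card_UN_disjoint) (auto simp: cherry_def)
  finally show ?thesis .
qed

lemma card_cherry_ge_detached:
  assumes "identifies_on V E D W" "finite D" "y \<in> Y" "cherry y \<subseteq> W"
  shows "2 + of_bool (y \<in> detached D) \<le> card (D \<inter> cherry y)"
  using card_cherry_ge[OF assms(1,2), of y "la y" "lb y" "par y"] assms(3,4)
  by (simp add: cherry_def detached_def closed_nbhd_Y closed_nbhd_la closed_nbhd_lb)

text \<open>A vertex x \<in> X outside D that is not the parent of a detached centre sees no vertex of D
  other than r. By domination and separation there is at most one such x, and none unless r \<in> D.\<close>
lemma card_X_Int_le:
  assumes D: "identifies_on V E D W" "finite D"
  shows "card (X \<inter> W) \<le> card (D \<inter> insert r X) + card (detached D)"
proof -
  define G where "G = (D \<inter> X) \<union> par ` detached D"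
  have finite_detached: "finite (detached D)" unfolding detached_def using finite_Y by simp
  have only_root: "closed_nbhd V E x \<inter> D = {r} \<inter> D" if "x \<in> X" "x \<notin> G" for x
    using that by (auto simp: closed_nbhd_X G_def detached_def)
  have bare: "card (X \<inter> W - G) \<le> of_bool (r \<in> D)"
  proof (cases "r \<in> D")
    case True
    have "x = x'" if "x \<in> X \<inter> W - G" "x' \<in> X \<inter> W - G" for x x'
      using identifies_on_separates[OF D(1), of x x'] only_root that by blast
    then have "card (X \<inter> W - G) \<le> Suc 0" using finite_X by (subst card_le_Suc0_iff_eq) auto
    then show ?thesis using True by simp
  next
    case False
    have "x \<notin> X \<inter> W - G" for x
      using identifies_on_dominates[OF D(1), of x] only_root[of x] False by auto
    then have "card (X \<inter> W - G) = 0" by (metis card.empty subsetI subset_empty)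
    then show ?thesis by simp
  qed
  have "finite G" unfolding G_def using finite_detached D(2) by blast
  then have "card (X \<inter> W) \<le> card (G \<union> (X \<inter> W - G))"
    using finite_X by (intro card_mono) auto
  also have "\<dots> \<le> card G + card (X \<inter> W - G)" by (rule card_Un_le)
  also have "card G \<le> card (D \<inter> X) + card (detached D)"
    unfolding G_def using card_Un_le card_image_le[OF finite_detached] by (meson add_left_mono le_trans)
  also have "card (D \<inter> insert r X) = of_bool (r \<in> D) + card (D \<inter> X)"
    using D(2) by (simp add: Int_insert_right card_insert_if)
  ultimately show ?thesis using bare by linarith
qed

lemma card_X_Int_plus_cherries_le:
  assumes "D \<subseteq> V" "identifies_on V E D W"
  shows "card (X \<inter> W) + (\<Sum>y\<in>Y. card (D \<inter> cherry y)) \<le> card D + card (detached D)"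
  using card_decompose[OF assms(1)] card_X_Int_le[OF assms(2)] assms(1) finite_V finite_subset
  by fastforce

lemma sum_cherries_ge:
  assumes "identifies_on V E D W" "finite D" "Y' \<subseteq> Y" "\<And>y. y \<in> Y' \<Longrightarrow> cherry y \<subseteq> W"
  shows "2 * card Y' + card (Y' \<inter> detached D) \<le> (\<Sum>y\<in>Y'. card (D \<inter> cherry y))"
proof -
  have "finite Y'" using assms(3) finite_Y finite_subset by blast
  then have "2 * card Y' + card (Y' \<inter> detached D) = (\<Sum>y\<in>Y'. 2 + of_bool (y \<in> detached D))"
    by (simp only: sum.distrib sum_of_bool_eq) (simp add: Int_def)
  also have "\<dots> \<le> (\<Sum>y\<in>Y'. card (D \<inter> cherry y))"
    using card_cherry_ge_detached[OF assms(1,2)] assms(3,4) by (intro sum_mono) blast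
  finally show ?thesis .
qed

lemma card_ge_if_cherries_kept:
  assumes D: "D \<subseteq> V" "identifies_on V E D W" and W: "\<And>y. y \<in> Y \<Longrightarrow> cherry y \<subseteq> W"
  shows "card (X \<inter> W) + 2 * card Y \<le> card D"
proof -
  have "finite D" using D(1) finite_V finite_subset by blast
  then have "2 * card Y + card (detached D) \<le> (\<Sum>y\<in>Y. card (D \<inter> cherry y))"
    using sum_cherries_ge[OF D(2) _ order_refl W] by (simp add: Int_absorb1 detached_def)
  then show ?thesis using card_X_Int_plus_cherries_le[OF D] by linarith
qed

text \<open>Without la y0, the vertex par y0 is needed to separate y0 from lb y0, so the cherry of y0
  can shrink to a single vertex but is not detached.\<close>
lemma card_ge_del_la:
  assumes y0: "y0 \<in> Y" and D: "D \<subseteq> V - {la y0}" "identifies_on V E D (V - {la y0})"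
  shows "2 + 2 * card Y \<le> card D"
proof -
  let ?W = "V - {la y0}"
  have finite_D: "finite D" using D(1) finite_V finite_subset by blast
  have in_W: "y0 \<in> ?W" "lb y0 \<in> ?W" using y0 in_V by auto
  have X_W: "X \<inter> ?W = X" using y0 in_V by auto
  have "closed_nbhd V E y0 \<inter> D \<noteq> closed_nbhd V E (lb y0) \<inter> D"
    using identifies_on_separates[OF D(2) in_W] y0 by simp
  then have "par y0 \<in> D" using D(1) y0 by (auto simp: closed_nbhd_Y closed_nbhd_lb)
  then have not_detached: "y0 \<notin> detached D" by (simp add: detached_def)
  have "closed_nbhd V E (lb y0) \<inter> D \<noteq> {}" using identifies_on_dominates[OF D(2) in_W(2)] .
  then have "D \<inter> cherry y0 \<noteq> {}" using y0 by (auto simp: closed_nbhd_lb cherry_def)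
  then have one: "1 \<le> card (D \<inter> cherry y0)" using finite_D by (simp add: Suc_le_eq card_gt_0_iff)
  have "cherry y \<subseteq> ?W" if "y \<in> Y - {y0}" for y
    using that y0 la_eq_iff in_V by (auto simp: cherry_def)
  then have "2 * card (Y - {y0}) + card ((Y - {y0}) \<inter> detached D)
      \<le> (\<Sum>y\<in>Y - {y0}. card (D \<inter> cherry y))"
    by (intro sum_cherries_ge[OF D(2) finite_D]) auto
  moreover have "(Y - {y0}) \<inter> detached D = detached D"
    using not_detached by (auto simp: detached_def)
  moreover have "(\<Sum>y\<in>Y. card (D \<inter> cherry y)) = card (D \<inter> cherry y0) + (\<Sum>y\<in>Y - {y0}. card (D \<inter> cherry y))"
    using sum.remove[OF finite_Y y0] by simp
  moreover have "card (Y - {y0}) + 1 = card Y"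
    using card_Suc_Diff1[OF finite_Y y0] by simp
  moreover have "card (X \<inter> ?W) = 3" using card_X X_W by simp
  ultimately show ?thesis using card_X_Int_plus_cherries_le[of D ?W] D one by fastforce
qed

lemma card_code_le_del:
  assumes v: "v \<in> code" and D: "D \<subseteq> V - {v}" "identifies_on V E D (V - {v})"
  shows "card code \<le> card D + 1"
proof -
  consider "v \<in> X" | y where "y \<in> Y" "v = la y" | y where "y \<in> Y" "v = lb y"
    using v unfolding code_def by blast
  then have "2 + 2 * card Y \<le> card D"
  proof cases
    case 1
    have "X \<inter> (V - {v}) = X - {v}" using in_V by blast
    then have "card (X \<inter> (V - {v})) = 2" using 1 card_X finite_X by simp
    moreover have "cherry y \<subseteq> V - {v}" if "y \<in> Y" for y
      using that 1 in_V by (auto simp: cherry_def)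
    ultimately show ?thesis using card_ge_if_cherries_kept[of D "V - {v}"] D by fastforce
  next
    case 2 then show ?thesis using card_ge_del_la D by blast
  next
    case 3 then show ?thesis using cherry_tree.card_ge_del_la[OF swap_leaves] D by blast
  qed
  then show ?thesis by (simp add: card_code)
qed

theorem is_min_identifying_code: "is_min_identifying_code V E code"
proof -
  have "is_identifying_code V E code"
    using identifies_on_code_minus[of "{}"] code_subset_V by (simp add: is_identifying_code_iff)
  moreover have "card code \<le> card D" if "is_identifying_code V E D" for D
  proof -
    have "D \<subseteq> V" "identifies_on V E D V" using that by (simp_all add: is_identifying_code_iff)
    then show ?thesis using card_ge_if_cherries_kept[of D V] card_X
      by (simp add: card_code cherry_def Int_absorb2 subset_iff in_V)
  qed
  ultimately show ?thesis unfolding is_min_identifying_code_def by blast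
qed

theorem is_min_identifying_code_del_vertex:
  assumes v: "v \<in> code"
  shows "is_min_identifying_code (del_vertex_V V v) (del_vertex_E E v) (code - {v})"
proof -
  have "is_identifying_code (del_vertex_V V v) (del_vertex_E E v) (code - {v})"
    using identifies_on_code_minus[of "{v}"] v code_subset_V
    by (auto simp: is_identifying_code_del_vertex_iff)
  moreover have "card (code - {v}) \<le> card D"
    if "is_identifying_code (del_vertex_V V v) (del_vertex_E E v) D" for D
  proof -
    have "card code \<le> card D + 1"
      using card_code_le_del[OF v] that by (simp add: is_identifying_code_del_vertex_iff)
    moreover have "card (code - {v}) = card code - 1" using v finite_code by simp
    ultimately show ?thesis by linarith
  qed
  ultimately show ?thesis unfolding is_min_identifying_code_def by blast
qed

lemma independent_code: "independent E code"
  unfolding independent_def adj_iff code_def by auto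

lemma degree_inner: "u \<in> insert r Y \<Longrightarrow> degree V E u = 3"
  using card_X by (auto simp: degree_eq_card_closed_nbhd closed_nbhd_root closed_nbhd_Y card_insert_if)

lemma low_degree_subset_code: "{v \<in> V. degree V E v \<le> 2} \<subseteq> code"
proof
  fix v assume "v \<in> {v \<in> V. degree V E v \<le> 2}"
  then have "v \<in> V" "v \<notin> insert r Y" using degree_inner by force+
  then show "v \<in> code" using V_minus_code by blast
qed

end

section \<open>Appending 3-stars\<close>

lemma inj_on_fun_upd_insert: "inj_on f A \<Longrightarrow> x \<notin> A \<Longrightarrow> v \<notin> f ` A \<Longrightarrow> inj_on (f(x := v)) (insert x A)"
  by (auto simp: inj_on_def)

context cherry_tree
begin

lemma append_star_at_X:
  assumes x: "x \<in> X" and new: "c \<notin> V" "a \<notin> V" "b \<notin> V" "distinct [c, a, b]"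
  shows "cherry_tree (V \<union> {c, a, b}) (E \<union> {{x, c}, {c, a}, {c, b}})
    r X (insert c Y) (par(c := x)) (la(c := a)) (lb(c := b))"
proof
  have c: "c \<notin> Y" using new in_V by blast
  have old: "(par(c := x)) y = par y" "(la(c := a)) y = la y" "(lb(c := b)) y = lb y" if "y \<in> Y" for y
    using that c by auto
  have images: "(la(c := a)) ` insert c Y = insert a (la ` Y)" "(lb(c := b)) ` insert c Y = insert b (lb ` Y)"
    "(\<lambda>y. {(par(c := x)) y, y}) ` insert c Y = insert {x, c} ((\<lambda>y. {par y, y}) ` Y)"
    "(\<lambda>y. {y, (la(c := a)) y}) ` insert c Y = insert {c, a} ((\<lambda>y. {y, la y}) ` Y)"
    "(\<lambda>y. {y, (lb(c := b)) y}) ` insert c Y = insert {c, b} ((\<lambda>y. {y, lb y}) ` Y)"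
    using old by (simp_all del: fun_upd_apply cong: image_cong) simp_all
  show "V \<union> {c, a, b} = insert r (X \<union> insert c Y \<union> (la(c := a)) ` insert c Y \<union> (lb(c := b)) ` insert c Y)"
    unfolding images V_eq by auto
  show "E \<union> {{x, c}, {c, a}, {c, b}} = (\<lambda>x. {r, x}) ` X \<union> (\<lambda>y. {(par(c := x)) y, y}) ` insert c Y
      \<union> (\<lambda>y. {y, (la(c := a)) y}) ` insert c Y \<union> (\<lambda>y. {y, (lb(c := b)) y}) ` insert c Y"
    unfolding images E_eq by auto
  show "card X = 3" "finite (insert c Y)" "r \<notin> X" "r \<notin> insert c Y" "X \<inter> insert c Y = {}"
    using card_X finite_Y X_Y_disjoint new in_V by auto
  show "(par(c := x)) y \<in> X" if "y \<in> insert c Y" for y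
    using that x old by auto
  show "(la(c := a)) y \<notin> insert r (X \<union> insert c Y)" "(lb(c := b)) y \<notin> insert r (X \<union> insert c Y)"
    if "y \<in> insert c Y" for y
    using that old new in_V by auto
  show "(la(c := a)) y \<noteq> (lb(c := b)) y'" if "y \<in> insert c Y" "y' \<in> insert c Y" for y y'
    using that old new in_V by auto
  show "inj_on (la(c := a)) (insert c Y)" "inj_on (lb(c := b)) (insert c Y)"
    using c new in_V by (intro inj_on_fun_upd_insert inj_la inj_lb; auto)+
qed

lemma reroot_vertices_edges:
  assumes y0: "y0 \<in> Y" and X: "X = {par y0, x1, x2}"
  shows "V = insert y0 ({par y0, la y0, lb y0} \<union> insert r (Y - {y0})
      \<union> (la(r := x1)) ` insert r (Y - {y0}) \<union> (lb(r := x2)) ` insert r (Y - {y0}))"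
    and "E = (\<lambda>x. {y0, x}) ` {par y0, la y0, lb y0}
      \<union> (\<lambda>y. {(par(r := par y0)) y, y}) ` insert r (Y - {y0})
      \<union> (\<lambda>y. {y, (la(r := x1)) y}) ` insert r (Y - {y0})
      \<union> (\<lambda>y. {y, (lb(r := x2)) y}) ` insert r (Y - {y0})"
proof -
  let ?Y' = "insert r (Y - {y0})"
  have old: "(par(r := par y0)) y = par y" "(la(r := x1)) y = la y" "(lb(r := x2)) y = lb y"
    if "y \<in> Y" for y
    using that by auto
  have images: "(la(r := x1)) ` ?Y' = insert x1 (la ` (Y - {y0}))"
    "(lb(r := x2)) ` ?Y' = insert x2 (lb ` (Y - {y0}))"
    "(\<lambda>y. {(par(r := par y0)) y, y}) ` ?Y' = insert {par y0, r} ((\<lambda>y. {par y, y}) ` (Y - {y0}))"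
    "(\<lambda>y. {y, (la(r := x1)) y}) ` ?Y' = insert {r, x1} ((\<lambda>y. {y, la y}) ` (Y - {y0}))"
    "(\<lambda>y. {y, (lb(r := x2)) y}) ` ?Y' = insert {r, x2} ((\<lambda>y. {y, lb y}) ` (Y - {y0}))"
    using old by (simp_all del: fun_upd_apply cong: image_cong) simp_all
  have old_images: "la ` Y = insert (la y0) (la ` (Y - {y0}))" "lb ` Y = insert (lb y0) (lb ` (Y - {y0}))"
    "(\<lambda>x. {r, x}) ` X = {{par y0, r}, {r, x1}, {r, x2}}"
    "(\<lambda>y. {par y, y}) ` Y = insert {par y0, y0} ((\<lambda>y. {par y, y}) ` (Y - {y0}))"
    "(\<lambda>y. {y, la y}) ` Y = insert {y0, la y0} ((\<lambda>y. {y, la y}) ` (Y - {y0}))"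
    "(\<lambda>y. {y, lb y}) ` Y = insert {y0, lb y0} ((\<lambda>y. {y, lb y}) ` (Y - {y0}))"
    using y0 X by (auto simp: insert_commute)
  show "V = insert y0 ({par y0, la y0, lb y0} \<union> ?Y' \<union> (la(r := x1)) ` ?Y' \<union> (lb(r := x2)) ` ?Y')"
    unfolding images V_eq X old_images using y0 by blast
  have "(\<lambda>x. {y0, x}) ` {par y0, la y0, lb y0} = {{par y0, y0}, {y0, la y0}, {y0, lb y0}}"
    by (auto simp: insert_commute)
  then show "E = (\<lambda>x. {y0, x}) ` {par y0, la y0, lb y0} \<union> (\<lambda>y. {(par(r := par y0)) y, y}) ` ?Y'
      \<union> (\<lambda>y. {y, (la(r := x1)) y}) ` ?Y' \<union> (\<lambda>y. {y, (lb(r := x2)) y}) ` ?Y'"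
    unfolding images E_eq old_images
    by (intro set_eqI) (simp only: Un_iff insert_iff empty_iff; argo)
qed

text \<open>If all of Y hangs below one vertex of X, the tree looks the same from any y0 \<in> Y.\<close>
lemma reroot:
  assumes y0: "y0 \<in> Y" and same_par: "\<And>y. y \<in> Y \<Longrightarrow> par y = par y0"
    and X: "X = {par y0, x1, x2}" "distinct [par y0, x1, x2]"
  shows "cherry_tree V E y0 {par y0, la y0, lb y0} (insert r (Y - {y0}))
    (par(r := par y0)) (la(r := x1)) (lb(r := x2))"
proof
  let ?Y' = "insert r (Y - {y0})"
  have x12: "x1 \<in> X" "x2 \<in> X" using X(1) by auto
  show "V = insert y0 ({par y0, la y0, lb y0} \<union> ?Y' \<union> (la(r := x1)) ` ?Y' \<union> (lb(r := x2)) ` ?Y')"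
    "E = (\<lambda>x. {y0, x}) ` {par y0, la y0, lb y0} \<union> (\<lambda>y. {(par(r := par y0)) y, y}) ` ?Y'
      \<union> (\<lambda>y. {y, (la(r := x1)) y}) ` ?Y' \<union> (\<lambda>y. {y, (lb(r := x2)) y}) ` ?Y'"
    using reroot_vertices_edges[OF y0 X(1)] by blast+
  show "card {par y0, la y0, lb y0} = 3" "finite ?Y'" "y0 \<notin> {par y0, la y0, lb y0}" "y0 \<notin> ?Y'"
    "{par y0, la y0, lb y0} \<inter> ?Y' = {}"
    using y0 finite_Y la_eq_iff lb_eq_iff by auto
  show "(par(r := par y0)) y \<in> {par y0, la y0, lb y0}" if "y \<in> ?Y'" for y
    using that same_par by auto
  have fresh_leaf: "l \<notin> insert y0 ({par y0, la y0, lb y0} \<union> ?Y')"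
    if l: "l \<in> {x1, x2} \<union> la ` (Y - {y0}) \<union> lb ` (Y - {y0})" for l
  proof -
    consider "l \<in> {x1, x2}" | y where "y \<in> Y - {y0}" "l = la y \<or> l = lb y" using l by blast
    then show ?thesis
    proof cases
      case 1 then show ?thesis using y0 X(2) x12 by auto
    next
      case 2 then show ?thesis using y0 la_eq_iff lb_eq_iff by auto
    qed
  qed
  have leaf_images: "(la(r := x1)) y \<in> insert x1 (la ` (Y - {y0}))"
    "(lb(r := x2)) y \<in> insert x2 (lb ` (Y - {y0}))" if "y \<in> ?Y'" for y
    using that by auto
  show "(la(r := x1)) y \<notin> insert y0 ({par y0, la y0, lb y0} \<union> ?Y')"
    "(lb(r := x2)) y \<notin> insert y0 ({par y0, la y0, lb y0} \<union> ?Y')" if "y \<in> ?Y'" for y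
    using fresh_leaf leaf_images[OF that] by blast+
  have "insert x1 (la ` (Y - {y0})) \<inter> insert x2 (lb ` (Y - {y0})) = {}"
    using X(2) x12 by auto
  then show "(la(r := x1)) y \<noteq> (lb(r := x2)) y'" if "y \<in> ?Y'" "y' \<in> ?Y'" for y y'
    using leaf_images(1)[OF that(1)] leaf_images(2)[OF that(2)] by (metis IntI empty_iff)
  show "inj_on (la(r := x1)) ?Y'" "inj_on (lb(r := x2)) ?Y'"
    using x12 by (intro inj_on_fun_upd_insert inj_on_subset[OF inj_la] inj_on_subset[OF inj_lb]; auto)+
qed

lemma graph_lipschitzI:
  assumes "\<And>x. x \<in> X \<Longrightarrow> \<bar>f r - f x\<bar> \<le> 1" "\<And>y. y \<in> Y \<Longrightarrow> \<bar>f (par y) - f y\<bar> \<le> 1"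
    "\<And>y. y \<in> Y \<Longrightarrow> \<bar>f y - f (la y)\<bar> \<le> 1" "\<And>y. y \<in> Y \<Longrightarrow> \<bar>f y - f (lb y)\<bar> \<le> 1"
  shows "graph_lipschitz E f"
  unfolding graph_lipschitz_def adj_iff using assms by (auto simp: abs_minus_commute)

text \<open>The witness is the depth below r, negated outside the branch of par y0: the new leaves
  reach 5 while y1 sits at -2.\<close>
lemma append_star_at_leaf_gap:
  assumes y0: "y0 \<in> Y" and y1: "y1 \<in> Y" "par y1 \<noteq> par y0" and v: "v \<in> {la y0, lb y0}"
    and new: "c \<notin> V" "a \<notin> V" "b \<notin> V" "distinct [c, a, b]"
  shows "has_lipschitz_gap (V \<union> {c, a, b}) (E \<union> {{v, c}, {c, a}, {c, b}}) 7"
proof -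
  define branch where "branch = {z. z = par y0 \<or> (\<exists>y\<in>Y. par y = par y0 \<and> z \<in> cherry y)}"
  define depth :: "'a \<Rightarrow> int" where
    "depth z = (if z = r then 0 else if z \<in> X then 1 else if z \<in> Y then 2 else 3)" for z
  define f where
    "f z = (if z \<in> V then (if z \<in> branch then depth z else - depth z) else if z = c then 4 else 5)" for z
  have f_root: "f r = 0" using y0 in_V by (auto simp: f_def depth_def branch_def cherry_def)
  have f_X: "f x = (if x = par y0 then 1 else -1)" if "x \<in> X" for x
    using that y0 in_V by (auto simp: f_def depth_def branch_def cherry_def)
  have f_Y: "f y = (if par y = par y0 then 2 else -2)" if "y \<in> Y" for y
    using that y0 in_V by (auto simp: f_def depth_def branch_def cherry_def)
  have f_leaves: "f (la y) = (if par y = par y0 then 3 else -3)" "f (lb y) = (if par y = par y0 then 3 else -3)"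
    if "y \<in> Y" for y
    using that y0 in_V la_eq_iff lb_eq_iff by (auto simp: f_def depth_def branch_def cherry_def)
  have f_new: "f c = 4" "f a = 5" "f b = 5" using new by (auto simp: f_def)
  have f_v: "f v = 3" using v f_leaves[OF y0] by auto
  have "graph_lipschitz E f"
    by (rule graph_lipschitzI) (simp_all add: f_root f_X f_Y f_leaves)
  then have "graph_lipschitz (E \<union> {{v, c}, {c, a}, {c, b}}) f"
    by (rule graph_lipschitz_append_star) (simp_all add: f_v f_new)
  moreover have "f y1 + 7 \<le> f a" using f_Y[OF y1(1)] y1(2) f_new by simp
  ultimately show ?thesis
    unfolding has_lipschitz_gap_def using in_V(3)[OF y1(1)] by (intro exI[of _ f] exI[of _ y1] exI[of _ a]) auto
qed

lemma append_star_at_leaf: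
  assumes y0: "y0 \<in> Y" and v: "v \<in> {la y0, lb y0}"
    and new: "c \<notin> V" "a \<notin> V" "b \<notin> V" "distinct [c, a, b]"
  shows "is_cherry_tree (V \<union> {c, a, b}) (E \<union> {{v, c}, {c, a}, {c, b}})
    \<or> has_lipschitz_gap (V \<union> {c, a, b}) (E \<union> {{v, c}, {c, a}, {c, b}}) 7"
proof (cases "\<exists>y1\<in>Y. par y1 \<noteq> par y0")
  case True
  then show ?thesis using append_star_at_leaf_gap[OF y0 _ _ v new] by blast
next
  case False
  have "card (X - {par y0}) = 2" using card_X finite_X y0 by simp
  then obtain x1 x2 where x12: "X - {par y0} = {x1, x2}" "x1 \<noteq> x2" by (meson card_2_iff)
  have "par y0 \<in> X" using y0 by simp
  then have "X = {par y0, x1, x2}" using x12(1) by blast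
  moreover have "distinct [par y0, x1, x2]" using x12 by (metis Diff_iff distinct_length_2_or_more
      distinct_singleton insertCI singletonI)
  ultimately have X: "X = {par y0, x1, x2}" "distinct [par y0, x1, x2]" by blast+
  interpret rerooted: cherry_tree V E y0 "{par y0, la y0, lb y0}" "insert r (Y - {y0})"
    "par(r := par y0)" "la(r := x1)" "lb(r := x2)"
    using reroot[OF y0 _ X] False by blast
  show ?thesis
    using rerooted.append_star_at_X[OF _ new] v unfolding is_cherry_tree_def by blast
qed

lemma append_star:
  assumes v: "v \<in> V" and new: "c \<notin> V" "a \<notin> V" "b \<notin> V" "distinct [c, a, b]"
  shows "is_cherry_tree (V \<union> {c, a, b}) (E \<union> {{v, c}, {c, a}, {c, b}})
    \<or> (\<exists>u\<in>V \<union> {c, a, b}. 3 < degree (V \<union> {c, a, b}) (E \<union> {{v, c}, {c, a}, {c, b}}) u)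
    \<or> has_lipschitz_gap (V \<union> {c, a, b}) (E \<union> {{v, c}, {c, a}, {c, b}}) 7"
proof -
  consider "v \<in> insert r Y" | "v \<in> X" | y where "y \<in> Y" "v \<in> {la y, lb y}"
    using v unfolding V_eq by blast
  then show ?thesis
  proof cases
    case 1
    have "\<forall>e\<in>E. e \<subseteq> V" unfolding E_eq V_eq by auto
    then have "degree (V \<union> {c, a, b}) (E \<union> {{v, c}, {c, a}, {c, b}}) v = 4"
      using degree_append_star[OF finite_V _ v new(1-3)] degree_inner[OF 1] by simp
    then show ?thesis using v by force
  next
    case 2
    then show ?thesis using append_star_at_X[OF 2 new] unfolding is_cherry_tree_def by blast
  next
    case 3
    then show ?thesis using append_star_at_leaf[OF _ _ new] by blast
  qed
qed

end

lemma appended_3star_cases: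
  assumes "appended_3star V E"
  shows "is_cherry_tree V E \<or> (\<exists>u\<in>V. 3 < degree V E u) \<or> has_lipschitz_gap V E 7"
  using assms
proof (induction rule: appended_3star.induct)
  case (base c l1 l2 l3)
  have "cherry_tree {c, l1, l2, l3} {{c, l1}, {c, l2}, {c, l3}} c {l1, l2, l3} {} id id id"
    using base by unfold_locales auto
  then show ?case unfolding is_cherry_tree_def by blast
next
  case (step V E v c a b)
  have new: "c \<notin> V" "a \<notin> V" "b \<notin> V" "distinct [c, a, b]" using step.hyps by auto
  have V: "finite V" "\<forall>e\<in>E. e \<subseteq> V" using appended_3star_finite[OF step.hyps(1)] by auto
  from step.IH show ?case
  proof (elim disjE)
    assume "is_cherry_tree V E"
    then show ?thesis using cherry_tree.append_star[OF _ step.hyps(2) new]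
      unfolding is_cherry_tree_def by blast
  next
    assume "\<exists>u\<in>V. 3 < degree V E u"
    then obtain u where u: "u \<in> V" "3 < degree V E u" by blast
    have "degree V E u \<le> degree (V \<union> {c, a, b}) (E \<union> {{v, c}, {c, a}, {c, b}}) u"
      using V(1) by (intro degree_mono) auto
    then show ?thesis using u by (intro disjI2 disjI1 bexI[of _ u]) auto
  next
    assume "has_lipschitz_gap V E 7"
    then show ?thesis using has_lipschitz_gap_append_star[OF _ V(2) step.hyps(2) new(1-3)] by blast
  qed
qed

lemma appended_3star_is_cherry_tree:
  assumes "appended_3star V E" "max_degree_eq V E 3" "diameter_le V E 6"
  shows "is_cherry_tree V E"
  using appended_3star_cases[OF assms(1)] assms(2,3) has_lipschitz_gap_not_diameter_le[of V E 6]
  unfolding max_degree_eq_def by fastforce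

section \<open>The tree T3\<close>

locale T3_graph =
  fixes V :: "'a set" and E :: "'a set set" and w x y z u1 a1 b1 u2 a2 b2 :: 'a
  assumes distinct: "distinct [w, x, y, z, u1, a1, b1, u2, a2, b2]"
    and V_eq: "V = {w, x, y, z, u1, a1, b1, u2, a2, b2}"
    and E_eq: "E = {{w, x}, {x, y}, {y, z}, {z, u1}, {u1, a1}, {u1, b1}, {z, u2}, {u2, a2}, {u2, b2}}"
begin

lemma closed_nbhds:
  "closed_nbhd V E w = {w, x}" "closed_nbhd V E x = {w, x, y}" "closed_nbhd V E y = {x, y, z}"
  "closed_nbhd V E z = {y, z, u1, u2}" "closed_nbhd V E u1 = {z, u1, a1, b1}"
  "closed_nbhd V E a1 = {u1, a1}" "closed_nbhd V E b1 = {u1, b1}"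
  "closed_nbhd V E u2 = {z, u2, a2, b2}" "closed_nbhd V E a2 = {u2, a2}" "closed_nbhd V E b2 = {u2, b2}"
  using distinct unfolding closed_nbhd_def adj_def V_eq E_eq by (auto simp: doubleton_eq_iff)

definition code :: "'a set" where
  "code = {w, x, y, a1, b1, a2, b2}"

lemma is_identifying_code: "is_identifying_code V E code"
proof -
  define pattern where "pattern v = map (\<lambda>c. c \<in> closed_nbhd V E v \<inter> code) [w, x, y, a1, b1, a2, b2]"
    for v
  have "distinct (map pattern [w, x, y, z, u1, a1, b1, u2, a2, b2])"
    using distinct by (simp add: pattern_def closed_nbhds code_def) blast
  then have "inj_on pattern V" unfolding distinct_map V_eq by (simp only: list.set)
  then have "inj_on (\<lambda>v. closed_nbhd V E v \<inter> code) V"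
    unfolding inj_on_def pattern_def by metis
  moreover have "closed_nbhd V E v \<inter> code \<noteq> {}" if "v \<in> V" for v
  proof -
    from that have "v \<in> {w, x, y, z, u1, a1, b1, u2, a2, b2}" by (simp only: V_eq)
    then show ?thesis by (auto simp: closed_nbhds code_def)
  qed
  moreover have "code \<subseteq> V" by (auto simp: V_eq code_def)
  ultimately show ?thesis unfolding is_identifying_code_def by (meson inj_onD)
qed

text \<open>The path w x y z contains three vertices of D unless x, z \<notin> D; then u1 or u2 lies in D to
  separate y from z, and its cherry lies entirely in D.\<close>
lemma card_ge_7:
  assumes "is_identifying_code V E D"
  shows "7 \<le> card D"
proof -
  have D: "D \<subseteq> V" "identifies_on V E D V" using assms by (simp_all add: is_identifying_code_iff)
  have finite_D: "finite D" using D(1) by (rule finite_subset) (simp add: V_eq)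
  have in_V: "w \<in> V" "x \<in> V" "y \<in> V" "z \<in> V" "u1 \<in> V" "a1 \<in> V" "b1 \<in> V" "u2 \<in> V" "a2 \<in> V" "b2 \<in> V"
    by (simp_all add: V_eq)
  note dominates = identifies_on_dominates[OF D(2)] and separates = identifies_on_separates[OF D(2)]
  have "y \<in> D" using separates[OF in_V(1,2)] distinct by (auto simp: closed_nbhds)
  moreover have "w \<in> D \<or> x \<in> D" using dominates[OF in_V(1)] by (auto simp: closed_nbhds)
  moreover have "w \<in> D \<or> z \<in> D" using separates[OF in_V(2,3)] distinct by (auto simp: closed_nbhds)
  moreover have "x \<in> D \<or> u1 \<in> D \<or> u2 \<in> D"
    using separates[OF in_V(3,4)] distinct by (auto simp: closed_nbhds)
  moreover have "card (D \<inter> {w, x, y, z}) = (if w \<in> D then 1 else 0) + (if x \<in> D then 1 else 0)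
      + (if y \<in> D then 1 else 0) + (if z \<in> D then 1 else (0::nat))"
    using distinct finite_D by (simp add: Int_insert_right card_insert_if)
  ultimately have path: "3 \<le> card (D \<inter> {w, x, y, z}) + of_bool (u1 \<in> D \<and> z \<notin> D) + of_bool (u2 \<in> D \<and> z \<notin> D)"
    by auto
  have cherries: "2 + of_bool (u1 \<in> D \<and> z \<notin> D) \<le> card (D \<inter> {u1, a1, b1})"
    "2 + of_bool (u2 \<in> D \<and> z \<notin> D) \<le> card (D \<inter> {u2, a2, b2})"
    by (rule card_cherry_ge[OF D(2) finite_D]; use in_V distinct in \<open>simp add: closed_nbhds insert_commute\<close>)+
  let ?parts = "D \<inter> {w, x, y, z} \<union> D \<inter> {u1, a1, b1} \<union> D \<inter> {u2, a2, b2}"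
  have "D \<inter> {w, x, y, z} \<inter> (D \<inter> {u1, a1, b1}) = {}"
    "(D \<inter> {w, x, y, z} \<union> D \<inter> {u1, a1, b1}) \<inter> (D \<inter> {u2, a2, b2}) = {}"
    using distinct by auto
  then have "card ?parts = card (D \<inter> {w, x, y, z}) + card (D \<inter> {u1, a1, b1}) + card (D \<inter> {u2, a2, b2})"
    using finite_D by (simp add: card_Un_disjoint)
  moreover have "card ?parts \<le> card D" using finite_D by (intro card_mono) auto
  ultimately show ?thesis using path cherries by linarith
qed

lemma low_degree_subset_code: "{v \<in> V. degree V E v \<le> 2} \<subseteq> code"
proof -
  have "degree V E v = 3" if "v \<in> {z, u1, u2}" for v
    using that distinct by (auto simp: degree_eq_card_closed_nbhd closed_nbhds)
  then show ?thesis by (force simp: V_eq code_def)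
qed

theorem is_min_identifying_code: "is_min_identifying_code V E code"
proof -
  have "card code = 7" using distinct by (simp add: code_def)
  then show ?thesis using is_identifying_code card_ge_7 unfolding is_min_identifying_code_def by simp
qed

end

theorem mainTheorem17:
  fixes V :: "'a set" and E :: "'a set set"
  assumes "in_cal_T3 V E"
  shows "(\<not> is_T2 V E \<longrightarrow>
            (\<exists>C. is_min_identifying_code V E C \<and> {v \<in> V. degree V E v \<le> 2} \<subseteq> C))
       \<and> (\<not> is_T2 V E \<and> \<not> is_T3 V E \<longrightarrow>
            (\<exists>C. is_min_identifying_code V E C \<and> independent E C
                 \<and> {v \<in> V. degree V E v \<le> 2} \<subseteq> C
                 \<and> (\<forall>v\<in>C. is_min_identifying_code (del_vertex_V V v) (del_vertex_E E v) (C - {v}))))"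
proof -
  consider "is_T2 V E" | "is_T3 V E"
    | "appended_3star V E" "max_degree_eq V E 3" "diameter_le V E 6"
    using assms unfolding in_cal_T3_def by blast
  then show ?thesis
  proof cases
    case 1
    then show ?thesis by blast
  next
    case 2
    then obtain w x y z u1 a1 b1 u2 a2 b2 where T: "T3_graph V E w x y z u1 a1 b1 u2 a2 b2"
      unfolding is_T3_def T3_graph_def by blast
    show ?thesis
      using 2 T3_graph.is_min_identifying_code[OF T] T3_graph.low_degree_subset_code[OF T] by blast
  next
    case 3
    then obtain r X Y par la lb where T: "cherry_tree V E r X Y par la lb"
      using appended_3star_is_cherry_tree unfolding is_cherry_tree_def by blast
    show ?thesis
      using cherry_tree.is_min_identifying_code[OF T] cherry_tree.independent_code[OF T]
        cherry_tree.low_degree_subset_code[OF T] cherry_tree.is_min_identifying_code_del_vertex[OF T]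
      by blast
  qed
qed

end
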